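(* Let $X$ be a complex separable Fréchet space and $T$ an invertible continuous linear operator on $X$ with discrete spectrum, i.e. $\overline{\mathrm{span}(\mathcal{E}(T))}=X$ where $\mathcal{E}(T)=\{x\in X:Tx=\lambda x\text{ for some }\lambda\in\mathbb{T}\}$. Then $T$ is hyper-recurrent and $\mathrm{Hr}(T)$ is dense in $X$.
   Context: $\mathbb{T}$ is the unit circle in $\mathbb{C}$. For a continuous linear operator $T$ on a Fréchet space $X$: $x$ is recurrent if $T^{\omega_n}x\to x$ for some strictly increasing sequence $(\omega_n)$ of positive integers; $\mathrm{Rec}(T)$ is the set of recurrent vectors and $T$ is recurrent if $\mathrm{Rec}(T)$ is dense. $\mathfrak{C}$ is the set of strictly increasing sequences $\omega$ with $T^{\omega_n}x\to x$ for some $x\ne0$; $\mathfrak{L}(\omega)=\{x:T^{\omega_n}x\to x\}$. $\mathrm{Hr}(T)$ is the set of $x\in\mathrm{Rec}(T)$ such that $\mathfrak{L}(\omega)$ is dense for every $\omega\in\mathfrak{C}$ with $x\in\mathfrak{L}(\omega)$; a recurrent $T$ is hyper-recurrent if $\mathrm{Hr}(T)\ne\emptyset$. *)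

theory Defs
  imports "HOL-Analysis.Analysis"
begin

text \<open>A complex Frechet space is modelled as a type 'a with an additive group
structure, a complex scalar multiplication sc making it a complex vector space
(library locale vector_space), and a countable family of seminorms p :: nat => 'a => real
which is separating and complete. The topology is the locally convex topology
generated by the seminorms (basic neighbourhoods of x: finitely many seminorms
less than delta).\<close>

definition cseminorm :: "(complex \<Rightarrow> 'a::ab_group_add \<Rightarrow> 'a) \<Rightarrow> ('a \<Rightarrow> real) \<Rightarrow> bool" where
  "cseminorm sc q \<longleftrightarrow> (\<forall>x y. q (x + y) \<le> q x + q y) \<and> (\<forall>c x. q (sc c x) = cmod c * q x)"

definition sn_conv :: "(nat \<Rightarrow> 'a::ab_group_add \<Rightarrow> real) \<Rightarrow> (nat \<Rightarrow> 'a) \<Rightarrow> 'a \<Rightarrow> bool" where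
  "sn_conv p s x \<longleftrightarrow> (\<forall>k. (\<lambda>n. p k (s n - x)) \<longlonglongrightarrow> 0)"

definition sn_cauchy :: "(nat \<Rightarrow> 'a::ab_group_add \<Rightarrow> real) \<Rightarrow> (nat \<Rightarrow> 'a) \<Rightarrow> bool" where
  "sn_cauchy p s \<longleftrightarrow> (\<forall>k. \<forall>e>0. \<exists>N. \<forall>m\<ge>N. \<forall>n\<ge>N. p k (s m - s n) < e)"

definition sn_closure :: "(nat \<Rightarrow> 'a::ab_group_add \<Rightarrow> real) \<Rightarrow> 'a set \<Rightarrow> 'a set" where
  "sn_closure p S = {x. \<forall>K e. finite K \<and> e > 0 \<longrightarrow> (\<exists>y\<in>S. \<forall>k\<in>K. p k (y - x) < e)}"

definition sn_dense :: "(nat \<Rightarrow> 'a::ab_group_add \<Rightarrow> real) \<Rightarrow> 'a set \<Rightarrow> bool" where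
  "sn_dense p S \<longleftrightarrow> sn_closure p S = UNIV"

definition sn_continuous :: "(nat \<Rightarrow> 'a::ab_group_add \<Rightarrow> real) \<Rightarrow> ('a \<Rightarrow> 'a) \<Rightarrow> bool" where
  "sn_continuous p f \<longleftrightarrow> (\<forall>x k e. e > 0 \<longrightarrow>
      (\<exists>K d. finite K \<and> d > 0 \<and> (\<forall>y. (\<forall>j\<in>K. p j (y - x) < d) \<longrightarrow> p k (f y - f x) < e)))"

definition complex_frechet :: "(complex \<Rightarrow> 'a::ab_group_add \<Rightarrow> 'a) \<Rightarrow> (nat \<Rightarrow> 'a \<Rightarrow> real) \<Rightarrow> bool" where
  "complex_frechet sc p \<longleftrightarrow> vector_space sc \<and> (\<forall>k. cseminorm sc (p k))
     \<and> (\<forall>x. (\<forall>k. p k x = 0) \<longrightarrow> x = 0)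
     \<and> (\<forall>s. sn_cauchy p s \<longrightarrow> (\<exists>x. sn_conv p s x))"

definition sn_separable :: "(nat \<Rightarrow> 'a::ab_group_add \<Rightarrow> real) \<Rightarrow> bool" where
  "sn_separable p \<longleftrightarrow> (\<exists>D. countable D \<and> sn_dense p D)"

definition unimod_eigvecs :: "(complex \<Rightarrow> 'a \<Rightarrow> 'a) \<Rightarrow> ('a \<Rightarrow> 'a) \<Rightarrow> 'a set" where
  "unimod_eigvecs sc T = {x. \<exists>c. cmod c = 1 \<and> T x = sc c x}"

definition rec_seq :: "(nat \<Rightarrow> 'a::ab_group_add \<Rightarrow> real) \<Rightarrow> ('a \<Rightarrow> 'a) \<Rightarrow> (nat \<Rightarrow> nat) \<Rightarrow> 'a \<Rightarrow> bool" where
  "rec_seq p T \<omega> x \<longleftrightarrow> sn_conv p (\<lambda>n. (T ^^ \<omega> n) x) x"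

definition admissible_seq :: "(nat \<Rightarrow> nat) \<Rightarrow> bool" where
  "admissible_seq \<omega> \<longleftrightarrow> strict_mono \<omega> \<and> (\<forall>n. 0 < \<omega> n)"

definition Rec :: "(nat \<Rightarrow> 'a::ab_group_add \<Rightarrow> real) \<Rightarrow> ('a \<Rightarrow> 'a) \<Rightarrow> 'a set" where
  "Rec p T = {x. \<exists>\<omega>. admissible_seq \<omega> \<and> rec_seq p T \<omega> x}"

definition recurrent_op :: "(nat \<Rightarrow> 'a::ab_group_add \<Rightarrow> real) \<Rightarrow> ('a \<Rightarrow> 'a) \<Rightarrow> bool" where
  "recurrent_op p T \<longleftrightarrow> sn_dense p (Rec p T)"

definition Cseqs :: "(nat \<Rightarrow> 'a::ab_group_add \<Rightarrow> real) \<Rightarrow> ('a \<Rightarrow> 'a) \<Rightarrow> (nat \<Rightarrow> nat) set" where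
  "Cseqs p T = {\<omega>. admissible_seq \<omega> \<and> (\<exists>x. x \<noteq> 0 \<and> rec_seq p T \<omega> x)}"

definition Lset :: "(nat \<Rightarrow> 'a::ab_group_add \<Rightarrow> real) \<Rightarrow> ('a \<Rightarrow> 'a) \<Rightarrow> (nat \<Rightarrow> nat) \<Rightarrow> 'a set" where
  "Lset p T \<omega> = {x. rec_seq p T \<omega> x}"

definition Hr :: "(nat \<Rightarrow> 'a::ab_group_add \<Rightarrow> real) \<Rightarrow> ('a \<Rightarrow> 'a) \<Rightarrow> 'a set" where
  "Hr p T = {x \<in> Rec p T. \<forall>\<omega>\<in>Cseqs p T. x \<in> Lset p T \<omega> \<longrightarrow> sn_dense p (Lset p T \<omega>)}"

definition hyper_recurrent :: "(nat \<Rightarrow> 'a::ab_group_add \<Rightarrow> real) \<Rightarrow> ('a \<Rightarrow> 'a) \<Rightarrow> bool" where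
  "hyper_recurrent p T \<longleftrightarrow> recurrent_op p T \<and> Hr p T \<noteq> {}"

end

(*
  Expand vectors along a countable family of unimodular eigenvectors e k, T (e k) = lam k e k,
  with coefficients that are absolutely summable in every seminorm. Such an expansion returns
  along every sequence \<omega> with lam k ^ \<omega> n \<rightarrow> 1 for all k, and a simultaneous Dirichlet
  approximation provides such \<omega>. Conversely, if an expansion x returns along \<omega>, then the averages
  (1/N) \<Sum>m<N. (cnj \<mu> T)^m applied to T^(\<omega> n) x - x \<rightarrow> 0 isolate (\<mu>^(\<omega> n) - 1) times the
  \<mu>-component of x, uniformly in n; hence \<mu>^(\<omega> n) \<rightarrow> 1 whenever that component is nonzero.
  If all eigencomponents of x are nonzero, every e k then lies in L(\<omega>), which is therefore dense,
  so x \<in> Hr(T). Finally, perturbing a finite combination of eigenvectors by t times a fixed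
  expansion with all components nonzero gives such an x for all t outside a countable set,
  so Hr(T) is dense.
*)

theory Submission
  imports Defs
begin

lemma sn_closure_mono: "A \<subseteq> B \<Longrightarrow> sn_closure p A \<subseteq> sn_closure p B"
  unfolding sn_closure_def by blast

lemma sn_closureI:
  "(\<And>K e. finite K \<Longrightarrow> e > 0 \<Longrightarrow> \<exists>y\<in>S. \<forall>k\<in>K. p k (y - x) < e) \<Longrightarrow> x \<in> sn_closure p S"
  unfolding sn_closure_def by blast

lemma sn_closureD:
  "x \<in> sn_closure p S \<Longrightarrow> finite K \<Longrightarrow> e > 0 \<Longrightarrow> \<exists>y\<in>S. \<forall>k\<in>K. p k (y - x) < e"
  unfolding sn_closure_def by blast

lemma tendsto_zero_if_nonneg_le:
  fixes f g :: "nat \<Rightarrow> real"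
  assumes "\<And>n. 0 \<le> f n" "\<And>n. f n \<le> g n" "g \<longlonglongrightarrow> 0"
  shows "f \<longlonglongrightarrow> 0"
  by (rule tendsto_sandwich[of "\<lambda>_. 0" f sequentially g 0]) (use assms in auto)

lemma weighted_suminf_tendsto_0:
  fixes f :: "nat \<Rightarrow> nat \<Rightarrow> complex" and w :: "nat \<Rightarrow> real"
  assumes lim: "\<And>k. (\<lambda>n. f n k) \<longlonglongrightarrow> 0" and bound: "\<And>n k. cmod (f n k) \<le> B"
    and w: "summable w" "\<And>k. w k \<ge> 0"
  shows "(\<lambda>n. \<Sum>k. cmod (f n k) * w k) \<longlonglongrightarrow> 0"
proof -
  have "(\<lambda>n. \<Sum>k. cmod (f n k) * w k) \<longlonglongrightarrow> (\<Sum>k. 0::real)"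
  proof (rule conjunct2[OF conjunct2[OF tannerys_theorem[where M="\<lambda>k. B * w k"]]])
    show "(\<lambda>n. cmod (f n k) * w k) \<longlonglongrightarrow> 0" for k
      using tendsto_norm_zero[OF lim[of k]] by (rule tendsto_mult_left_zero)
    have "norm (cmod (f n k) * w k) \<le> B * w k" for n k
      using mult_right_mono[OF bound w(2)] w(2)[of k] by simp
    then show "\<forall>\<^sub>F (k, n) in sequentially \<times>\<^sub>F sequentially. norm (cmod (f n k) * w k) \<le> B * w k"
      by (intro always_eventually) auto
    show "summable (\<lambda>k. B * w k)" using w(1) by (rule summable_mult)
  qed simp
  then show ?thesis by simp
qed

subsection \<open>Simultaneous returns of unimodular powers\<close>

lemma unimodular_powers_convergent_subseq:
  fixes lam :: "nat \<Rightarrow> complex"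
  assumes unimodular: "\<And>k. cmod (lam k) = 1"
  shows "\<exists>r. strict_mono r \<and> (\<forall>k<K. convergent (\<lambda>n. lam k ^ r n))"
proof (induction K)
  case 0
  show ?case by (rule exI[of _ id]) (simp add: strict_mono_def)
next
  case (Suc K)
  then obtain r where r: "strict_mono r" "\<And>k. k < K \<Longrightarrow> convergent (\<lambda>n. lam k ^ r n)" by blast
  have "bounded (range (\<lambda>n. lam K ^ r n))"
    unfolding bounded_iff by (intro exI[of _ 1]) (auto simp: norm_power unimodular)
  then obtain l s where s: "strict_mono s" "((\<lambda>n. lam K ^ r n) \<circ> s) \<longlonglongrightarrow> l"
    using bounded_imp_convergent_subsequence by blast
  have "convergent (\<lambda>n. lam k ^ (r \<circ> s) n)" if "k < Suc K" for k
  proof (cases "k = K")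
    case True
    then show ?thesis using s(2) unfolding convergent_def o_def by blast
  next
    case False
    then have "convergent ((\<lambda>n. lam k ^ r n) \<circ> s)"
      using that r(2)[of k] s(1) by (intro convergent_subseq_convergent) auto
    then show ?thesis by (simp add: o_def)
  qed
  then show ?case using strict_mono_o[OF r(1) s(1)] by blast
qed

text \<open>If the first \<open>K\<close> power sequences converge along \<open>r\<close>, then \<open>lam k ^ r a\<close> and
  \<open>lam k ^ r b\<close> are close for large \<open>a < b\<close>, so \<open>m = r b - r a\<close> is a common approximate return time.\<close>
lemma unimodular_powers_return:
  fixes lam :: "nat \<Rightarrow> complex"
  assumes unimodular: "\<And>k. cmod (lam k) = 1" and "\<epsilon> > 0"
  shows "\<exists>m > B. \<forall>k<K. cmod (lam k ^ m - 1) < \<epsilon>"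
proof -
  obtain r where r: "strict_mono r" "\<forall>k<K. convergent (\<lambda>n. lam k ^ r n)"
    using unimodular_powers_convergent_subseq[of lam K, OF unimodular] by blast
  have "\<forall>\<^sub>F a in sequentially. \<forall>k\<in>{..<K}. \<forall>b\<ge>a. dist (lam k ^ r a) (lam k ^ r b) < \<epsilon>"
  proof (rule eventually_ball_finite)
    show "finite {..<K}" by simp
  next
    show "\<forall>k\<in>{..<K}. \<forall>\<^sub>F a in sequentially. \<forall>b\<ge>a. dist (lam k ^ r a) (lam k ^ r b) < \<epsilon>"
    proof
      fix k assume "k \<in> {..<K}"
      then have "Cauchy (\<lambda>n. lam k ^ r n)" using r(2) by (simp add: convergent_Cauchy)
      then obtain M where M: "\<And>a b. a \<ge> M \<Longrightarrow> b \<ge> M \<Longrightarrow> dist (lam k ^ r a) (lam k ^ r b) < \<epsilon>"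
        using metric_CauchyD[OF _ \<open>\<epsilon> > 0\<close>] by blast
      show "\<forall>\<^sub>F a in sequentially. \<forall>b\<ge>a. dist (lam k ^ r a) (lam k ^ r b) < \<epsilon>"
        using eventually_ge_at_top[of M] by (rule eventually_mono) (use M in auto)
    qed
  qed
  then obtain a where a: "\<And>k b. k < K \<Longrightarrow> b \<ge> a \<Longrightarrow> dist (lam k ^ r a) (lam k ^ r b) < \<epsilon>"
    unfolding eventually_sequentially by blast
  define b where "b = max a (r a + B + 1)"
  have "b \<ge> a" unfolding b_def by simp
  have "r b \<ge> b" using r(1) by (rule seq_suble)
  then have rb: "r b > r a + B" unfolding b_def by simp
  define m where "m = r b - r a"
  have "m > B" using rb unfolding m_def by simp
  moreover have "cmod (lam k ^ m - 1) < \<epsilon>" if "k < K" for k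
  proof -
    have "lam k ^ r b = lam k ^ r a * lam k ^ m"
      unfolding m_def using rb by (simp flip: power_add)
    then have "lam k ^ r b - lam k ^ r a = lam k ^ r a * (lam k ^ m - 1)"
      by (simp add: algebra_simps)
    then have "cmod (lam k ^ r b - lam k ^ r a) = cmod (lam k ^ m - 1)"
      by (simp add: norm_mult norm_power unimodular)
    then have "cmod (lam k ^ m - 1) = cmod (lam k ^ r a - lam k ^ r b)"
      by (simp add: norm_minus_commute[of "lam k ^ r a"])
    then show ?thesis using a[OF that \<open>b \<ge> a\<close>] by (simp add: dist_norm)
  qed
  ultimately show ?thesis by blast
qed

lemma unimodular_powers_return_seq:
  fixes lam :: "nat \<Rightarrow> complex"
  assumes unimodular: "\<And>k. cmod (lam k) = 1"
  obtains \<omega> where "admissible_seq \<omega>" "\<And>k. (\<lambda>n. lam k ^ \<omega> n) \<longlonglongrightarrow> 1"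
proof -
  define g where
    "g n b = (SOME m. m > b \<and> (\<forall>k<n. cmod (lam k ^ m - 1) < inverse (real (Suc n))))" for n b
  have g: "g n b > b \<and> (\<forall>k<n. cmod (lam k ^ g n b - 1) < inverse (real (Suc n)))" for n b
    unfolding g_def by (rule someI_ex, rule unimodular_powers_return[of lam, OF unimodular]) simp
  define \<omega> where "\<omega> = rec_nat (g 0 0) (\<lambda>n. g (Suc n))"
  have \<omega>_Suc: "\<omega> (Suc n) = g (Suc n) (\<omega> n)" for n unfolding \<omega>_def by simp
  have \<omega>_g: "\<exists>b. \<omega> n = g n b" for n
    by (cases n) (auto simp: \<omega>_def)
  have "strict_mono \<omega>" unfolding strict_mono_Suc_iff using g \<omega>_Suc by simp
  moreover have "0 < \<omega> n" for n
  proof -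
    obtain b where "\<omega> n = g n b" using \<omega>_g by blast
    then show ?thesis using g[where n=n and b=b] by simp
  qed
  ultimately have "admissible_seq \<omega>" unfolding admissible_seq_def by blast
  moreover have "(\<lambda>n. lam k ^ \<omega> n) \<longlonglongrightarrow> 1" for k
  proof -
    have "cmod (lam k ^ \<omega> n - 1) \<le> inverse (real (Suc n))" if "n \<ge> Suc k" for n
    proof -
      obtain b where "\<omega> n = g n b" using \<omega>_g by blast
      then show ?thesis using g[where n=n and b=b] that by (simp add: less_imp_le)
    qed
    then have "\<forall>\<^sub>F n in sequentially. norm (lam k ^ \<omega> n - 1) \<le> inverse (real (Suc n))"
      unfolding eventually_sequentially by blast
    then have "(\<lambda>n. lam k ^ \<omega> n - 1) \<longlonglongrightarrow> 0"
      by (rule Lim_null_comparison[OF _ LIMSEQ_inverse_real_of_nat])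
    then show ?thesis by (rule LIM_zero_cancel)
  qed
  ultimately show ?thesis using that by blast
qed

subsection \<open>Power means on the unit circle\<close>

definition power_mean :: "nat \<Rightarrow> complex \<Rightarrow> complex" where
  "power_mean N \<mu> = (\<Sum>m<N. \<mu> ^ m) / of_nat N"

lemma power_mean_1: "N > 0 \<Longrightarrow> power_mean N 1 = 1"
  unfolding power_mean_def by simp

lemma norm_power_mean_le:
  assumes "cmod \<mu> = 1" shows "cmod (power_mean N \<mu>) \<le> 1"
proof (cases "N = 0")
  case False
  have "cmod (\<Sum>m<N. \<mu> ^ m) \<le> (\<Sum>m<N. cmod (\<mu> ^ m))" by (rule norm_sum)
  also have "\<dots> = real N" by (simp add: norm_power assms)
  finally show ?thesis using False by (simp add: power_mean_def norm_divide)
qed (simp add: power_mean_def)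

lemma power_mean_tendsto_0:
  assumes "cmod \<mu> = 1" "\<mu> \<noteq> 1" shows "(\<lambda>N. power_mean N \<mu>) \<longlonglongrightarrow> 0"
proof (rule Lim_null_comparison)
  have "cmod (1 - \<mu> ^ N) \<le> 2" for N
    using norm_triangle_ineq4[of 1 "\<mu> ^ N"] by (simp add: norm_power assms)
  then have "cmod (\<Sum>m<N. \<mu> ^ m) \<le> 2 / cmod (1 - \<mu>)" for N
    using assms(2) by (simp add: sum_gp_strict norm_divide divide_right_mono)
  then have "cmod (\<Sum>m<N. \<mu> ^ m) * inverse (real N) \<le> 2 / cmod (1 - \<mu>) * inverse (real N)" for N
    by (rule mult_right_mono) simp
  then show "\<forall>\<^sub>F N in sequentially. norm (power_mean N \<mu>) \<le> (2 / cmod (1 - \<mu>)) * inverse (real N)"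
    by (intro always_eventually allI)
      (simp add: power_mean_def norm_divide divide_inverse norm_mult norm_inverse)
  show "(\<lambda>N. (2 / cmod (1 - \<mu>)) * inverse (real N)) \<longlonglongrightarrow> 0"
    by (rule tendsto_mult_right_zero) (rule lim_inverse_n)
qed

subsection \<open>Complex Frechet spaces\<close>

locale complex_frechet_space = vector_space sc for sc :: "complex \<Rightarrow> 'a::ab_group_add \<Rightarrow> 'a" +
  fixes p :: "nat \<Rightarrow> 'a \<Rightarrow> real"
  assumes seminorm: "\<And>k. cseminorm sc (p k)"
    and separating: "\<And>x. (\<forall>k. p k x = 0) \<Longrightarrow> x = 0"
    and complete: "\<And>s. sn_cauchy p s \<Longrightarrow> \<exists>x. sn_conv p s x"
begin

lemma seminorm_add: "p k (x + y) \<le> p k x + p k y"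
  using seminorm[of k] unfolding cseminorm_def by blast

lemma seminorm_scale: "p k (sc c x) = cmod c * p k x"
  using seminorm[of k] unfolding cseminorm_def by blast

lemma seminorm_zero [simp]: "p k 0 = 0"
  using seminorm_scale[of k 0 0] by simp

lemma seminorm_minus: "p k (- x) = p k x"
  using seminorm_scale[of k "-1" x] by simp

lemma seminorm_nonneg: "p k x \<ge> 0"
  using seminorm_add[of k x "-x"] seminorm_minus[of k x] by simp

lemma seminorm_diff_commute: "p k (x - y) = p k (y - x)"
  using seminorm_minus[of k "x - y"] by simp

lemma seminorm_diff_triangle: "p k (x - z) \<le> p k (x - y) + p k (y - z)"
  using seminorm_add[of k "x - y" "y - z"] by simp

lemma seminorm_diff_reverse: "\<bar>p k x - p k y\<bar> \<le> p k (x - y)"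
  using seminorm_add[of k "x - y" y] seminorm_add[of k "y - x" x] seminorm_diff_commute[of k x y]
  by auto

lemma seminorm_sum: "p k (sum f A) \<le> (\<Sum>i\<in>A. p k (f i))"
proof (induction A rule: infinite_finite_induct)
  case (insert i A)
  have "p k (f i + sum f A) \<le> p k (f i) + p k (sum f A)" by (rule seminorm_add)
  also have "\<dots> \<le> p k (f i) + (\<Sum>i\<in>A. p k (f i))" using insert.IH by simp
  finally show ?case using insert.hyps by simp
qed auto

lemma sn_conv_eventually_seminorm_less:
  assumes "sn_conv p s x" "r > 0"
  shows "\<forall>\<^sub>F n in sequentially. p k (s n - x) < r"
proof -
  have "(\<lambda>n. p k (s n - x)) \<longlonglongrightarrow> 0" using assms(1) unfolding sn_conv_def by blast
  then show ?thesis using assms(2) by (rule order_tendstoD)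
qed

lemma sn_conv_dominated:
  assumes "sn_conv p s x" "\<And>k n. p k (u n - y) \<le> C k * p k (s n - x)"
  shows "sn_conv p u y"
  unfolding sn_conv_def
proof
  fix k
  have "(\<lambda>n. p k (s n - x)) \<longlonglongrightarrow> 0"
    using assms(1) unfolding sn_conv_def by blast
  then have "(\<lambda>n. C k * p k (s n - x)) \<longlonglongrightarrow> 0"
    by (rule tendsto_mult_right_zero)
  then show "(\<lambda>n. p k (u n - y)) \<longlonglongrightarrow> 0"
    by (rule tendsto_zero_if_nonneg_le[OF seminorm_nonneg assms(2)])
qed

lemma sn_conv_const: "sn_conv p (\<lambda>n. x) x"
  by (simp add: sn_conv_def)

lemma sn_conv_add:
  assumes "sn_conv p s x" "sn_conv p t y"
  shows "sn_conv p (\<lambda>n. s n + t n) (x + y)"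
  unfolding sn_conv_def
proof
  fix k
  have "(\<lambda>n. p k (s n - x) + p k (t n - y)) \<longlonglongrightarrow> 0"
    using assms tendsto_add[of "\<lambda>n. p k (s n - x)" 0 _ "\<lambda>n. p k (t n - y)" 0]
    unfolding sn_conv_def by simp
  moreover have "p k (s n + t n - (x + y)) \<le> p k (s n - x) + p k (t n - y)" for n
    using seminorm_add[of k "s n - x" "t n - y"] by (simp add: algebra_simps)
  ultimately show "(\<lambda>n. p k (s n + t n - (x + y))) \<longlonglongrightarrow> 0"
    by (intro tendsto_zero_if_nonneg_le[OF seminorm_nonneg]) auto
qed

lemma sn_conv_scale:
  assumes "sn_conv p s x"
  shows "sn_conv p (\<lambda>n. sc c (s n)) (sc c x)"
  by (rule sn_conv_dominated[OF assms, of _ _ "\<lambda>_. cmod c"])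
    (simp add: seminorm_scale flip: scale_right_diff_distrib)

lemma sn_conv_unique:
  assumes "sn_conv p s x" "sn_conv p s y"
  shows "x = y"
proof -
  have "p k (x - y) = 0" for k
  proof -
    have "(\<lambda>n. p k (s n - y) + p k (s n - x)) \<longlonglongrightarrow> 0"
      using assms tendsto_add[of "\<lambda>n. p k (s n - y)" 0 _ "\<lambda>n. p k (s n - x)" 0]
      unfolding sn_conv_def by simp
    moreover have "p k (x - y) \<le> p k (s n - y) + p k (s n - x)" for n
      using seminorm_diff_triangle[where k=k and x=x and y="s n" and z=y]
        seminorm_diff_commute[of k x "s n"] by linarith
    ultimately have "p k (x - y) \<le> 0"
      by (intro tendsto_le[OF _ _ tendsto_const]) auto
    then show ?thesis using seminorm_nonneg[of k "x - y"] by simp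
  qed
  then show ?thesis using separating[of "x - y"] by simp
qed

lemma sn_conv_seminorm:
  assumes "sn_conv p s x"
  shows "(\<lambda>n. p k (s n)) \<longlonglongrightarrow> p k x"
proof -
  have "(\<lambda>n. p k (s n - x)) \<longlonglongrightarrow> 0" using assms unfolding sn_conv_def by auto
  then have "(\<lambda>n. p k (s n) - p k x) \<longlonglongrightarrow> 0"
    by (rule Lim_null_comparison[OF always_eventually, rotated]) (simp add: seminorm_diff_reverse)
  then show ?thesis by (rule LIM_zero_cancel)
qed

lemma tendsto_0_if_uniformly_approximated:
  fixes c :: "nat \<Rightarrow> complex" and \<delta> :: "nat \<Rightarrow> real"
  assumes S: "p m S > 0" and \<delta>: "\<delta> \<longlonglongrightarrow> 0" and a: "\<And>N. sn_conv p (a N) 0"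
    and approx: "\<And>N n. N > 0 \<Longrightarrow> p m (a N n - sc (c n) S) \<le> \<delta> N"
  shows "c \<longlonglongrightarrow> 0"
proof (rule tendstoI)
  fix \<epsilon> :: real assume "\<epsilon> > 0"
  define r where "r = \<epsilon> * p m S / 2"
  have "r > 0" unfolding r_def using \<open>\<epsilon> > 0\<close> S by simp
  have "\<forall>\<^sub>F N in sequentially. \<delta> N < r \<and> N > 0"
    using order_tendstoD(2)[OF \<delta> \<open>r > 0\<close>] eventually_gt_at_top[of 0] by (rule eventually_conj)
  then obtain N where N: "\<delta> N < r" "N > 0" unfolding eventually_sequentially by blast
  show "\<forall>\<^sub>F n in sequentially. dist (c n) 0 < \<epsilon>"
    using sn_conv_eventually_seminorm_less[OF a[of N] \<open>r > 0\<close>, of m]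
  proof (rule eventually_mono)
    fix n assume n: "p m (a N n - 0) < r"
    have "cmod (c n) * p m S = p m (sc (c n) S)" by (simp add: seminorm_scale)
    also have "\<dots> \<le> p m (a N n) + p m (a N n - sc (c n) S)"
      using seminorm_diff_triangle[where k=m and x="sc (c n) S" and y="a N n" and z=0]
        seminorm_diff_commute[of m "sc (c n) S"] by simp
    also have "\<dots> < r + r" using n approx[OF N(2), of n] N(1) by simp
    finally have "cmod (c n) < \<epsilon>" using S unfolding r_def by simp
    then show "dist (c n) 0 < \<epsilon>" by simp
  qed
qed

lemma sn_continuous_sn_conv:
  assumes f: "sn_continuous p f" and s: "sn_conv p s x"
  shows "sn_conv p (\<lambda>n. f (s n)) (f x)"
  unfolding sn_conv_def
proof
  fix k
  show "(\<lambda>n. p k (f (s n) - f x)) \<longlonglongrightarrow> 0"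
  proof (rule order_tendstoI)
    show "\<forall>\<^sub>F n in sequentially. a < p k (f (s n) - f x)" if "a < 0" for a :: real
      by (auto intro!: always_eventually less_le_trans[OF that seminorm_nonneg])
  next
    fix r :: real assume "0 < r"
    then obtain K d where K: "finite K" "d > 0"
      and near: "\<And>y. \<forall>j\<in>K. p j (y - x) < d \<Longrightarrow> p k (f y - f x) < r"
      using f unfolding sn_continuous_def by meson
    have "\<forall>\<^sub>F n in sequentially. \<forall>j\<in>K. p j (s n - x) < d"
      using K s by (intro eventually_ball_finite ballI sn_conv_eventually_seminorm_less)
    then show "\<forall>\<^sub>F n in sequentially. p k (f (s n) - f x) < r"
      by (rule eventually_mono) (rule near)
  qed
qed

lemma sn_closure_trans:
  assumes "A \<subseteq> sn_closure p B"
  shows "sn_closure p A \<subseteq> sn_closure p B"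
proof
  fix x assume x: "x \<in> sn_closure p A"
  show "x \<in> sn_closure p B"
  proof (rule sn_closureI)
    fix K :: "nat set" and r :: real assume K: "finite K" and "r > 0"
    then have r: "r / 2 > 0" by simp
    obtain a where "a \<in> A" and a: "\<forall>k\<in>K. p k (a - x) < r / 2"
      using sn_closureD[OF x K r] by blast
    then have "a \<in> sn_closure p B" using assms by blast
    then obtain b where "b \<in> B" and b: "\<forall>k\<in>K. p k (b - a) < r / 2"
      using sn_closureD[OF _ K r] by blast
    have "p k (b - x) < r" if "k \<in> K" for k
      using seminorm_diff_triangle[where k=k and x=b and y=a and z=x] a b that by force
    then show "\<exists>y\<in>B. \<forall>k\<in>K. p k (y - x) < r" using \<open>b \<in> B\<close> by blast
  qed
qed

lemma sn_closure_iff_nat: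
  "x \<in> sn_closure p S \<longleftrightarrow> (\<forall>n. \<exists>y\<in>S. \<forall>k\<le>n. p k (y - x) < inverse (real (Suc n)))"
proof
  assume x: "x \<in> sn_closure p S"
  show "\<forall>n. \<exists>y\<in>S. \<forall>k\<le>n. p k (y - x) < inverse (real (Suc n))"
  proof
    fix n
    show "\<exists>y\<in>S. \<forall>k\<le>n. p k (y - x) < inverse (real (Suc n))"
      using sn_closureD[OF x, of "{..n}" "inverse (real (Suc n))"] by auto
  qed
next
  assume near: "\<forall>n. \<exists>y\<in>S. \<forall>k\<le>n. p k (y - x) < inverse (real (Suc n))"
  show "x \<in> sn_closure p S"
  proof (rule sn_closureI)
    fix K :: "nat set" and r :: real assume "finite K" "r > 0"
    obtain n0 where n0: "inverse (real (Suc n0)) < r" using \<open>r > 0\<close> reals_Archimedean by blast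
    obtain n1 where n1: "K \<subseteq> {..n1}" using \<open>finite K\<close> finite_nat_iff_bounded_le by blast
    define n where "n = max n0 n1"
    obtain y where "y \<in> S" and y: "\<forall>k\<le>n. p k (y - x) < inverse (real (Suc n))"
      using near by blast
    have n_n0: "inverse (real (Suc n)) \<le> inverse (real (Suc n0))"
      unfolding n_def by (simp add: le_imp_inverse_le)
    have y_K: "p k (y - x) < inverse (real (Suc n))" if "k \<in> K" for k
      using n1 that y unfolding n_def by auto
    have "p k (y - x) < r" if "k \<in> K" for k
      using y_K[OF that] n_n0 n0 by linarith
    then show "\<exists>y\<in>S. \<forall>k\<in>K. p k (y - x) < r" using \<open>y \<in> S\<close> by blast
  qed
qed

lemma countable_dense_subset:
  assumes "sn_separable p" "sn_dense p S"
  obtains Y where "Y \<subseteq> S" "countable Y" "sn_dense p Y"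
proof -
  obtain D where "countable D" and D: "sn_dense p D"
    using assms(1) unfolding sn_separable_def by blast
  define y where
    "y = (\<lambda>(d, n). SOME z. z \<in> S \<and> (\<forall>k\<le>n. p k (z - d) < inverse (real (Suc n))))"
  have "\<exists>z. z \<in> S \<and> (\<forall>k\<le>n. p k (z - d) < inverse (real (Suc n)))" for d n
    using sn_closure_iff_nat[of d S] assms(2) unfolding sn_dense_def by blast
  then have "y (d, n) \<in> S \<and> (\<forall>k\<le>n. p k (y (d, n) - d) < inverse (real (Suc n)))" for d n
    unfolding y_def prod.case by (rule someI_ex)
  then have y: "\<And>d n. y (d, n) \<in> S"
    "\<And>d n k. k \<le> n \<Longrightarrow> p k (y (d, n) - d) < inverse (real (Suc n))"
    by blast+
  define Y where "Y = y ` (D \<times> UNIV)"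
  have "d \<in> sn_closure p Y" if "d \<in> D" for d
    unfolding sn_closure_iff_nat
  proof
    fix n
    have "y (d, n) \<in> Y" unfolding Y_def using that by blast
    then show "\<exists>z\<in>Y. \<forall>k\<le>n. p k (z - d) < inverse (real (Suc n))" using y(2) by blast
  qed
  then have "sn_dense p Y"
    using D sn_closure_trans[of D Y] unfolding sn_dense_def by blast
  moreover have "Y \<subseteq> S" "countable Y"
    unfolding Y_def using y(1) \<open>countable D\<close> by auto
  ultimately show ?thesis using that by blast
qed

lemma countable_subset_spanning:
  assumes "countable Y" "Y \<subseteq> span E"
  obtains F where "F \<subseteq> E - {0}" "countable F" "Y \<subseteq> span F"
proof -
  have "\<forall>y\<in>Y. \<exists>t. finite t \<and> t \<subseteq> E \<and> y \<in> span t"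
  proof
    fix y assume "y \<in> Y"
    obtain t r where y: "y = (\<Sum>a\<in>t. sc (r a) a)" "finite t" "t \<subseteq> E"
      using \<open>Y \<subseteq> span E\<close> \<open>y \<in> Y\<close> unfolding span_explicit by blast
    have "y \<in> span t"
      unfolding y(1) by (intro span_sum span_scale span_base)
    then show "\<exists>t. finite t \<and> t \<subseteq> E \<and> y \<in> span t" using y by blast
  qed
  from bchoice[OF this] obtain t
    where t: "\<forall>y\<in>Y. finite (t y) \<and> t y \<subseteq> E \<and> y \<in> span (t y)"
    by blast
  define F where "F = (\<Union>y\<in>Y. t y) - {0}"
  have "y \<in> span F" if "y \<in> Y" for y
  proof -
    have "span (t y - {0}) \<subseteq> span F"
      unfolding F_def using that by (intro span_mono) blast
    then show ?thesis using t that span_delete_0[of "t y"] by blast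
  qed
  moreover have "F \<subseteq> E - {0}" "countable F"
    unfolding F_def using t \<open>countable Y\<close> by (auto intro: countable_finite)
  ultimately show ?thesis using that by blast
qed

text \<open>Each line \<open>t \<mapsto> U j + t W j\<close> meets \<open>0\<close> for at most one real \<open>t\<close>, so countably many lines
  miss \<open>0\<close> for all \<open>t\<close> outside a countable set.\<close>
lemma small_real_avoiding_lines:
  assumes "\<And>j::nat. W j \<noteq> 0" "\<delta> > 0"
  obtains t :: real where "0 < t" "t < \<delta>" "\<And>j. U j + sc (of_real t) (W j) \<noteq> 0"
proof -
  define bad where "bad j = {t::real. U j + sc (of_real t) (W j) = 0}" for j
  have "bad j \<subseteq> {SOME t. t \<in> bad j}" for j
  proof
    fix t assume t: "t \<in> bad j"
    then have t': "(SOME t. t \<in> bad j) \<in> bad j" by (rule someI)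
    define s where "s = (SOME t. t \<in> bad j)"
    have "sc (of_real t - of_real s) (W j) = (U j + sc (of_real t) (W j)) - (U j + sc (of_real s) (W j))"
      by (simp add: scale_left_diff_distrib)
    also have "\<dots> = 0" using t t' unfolding bad_def s_def by simp
    finally show "t \<in> {SOME t. t \<in> bad j}" using assms(1)[of j] unfolding s_def by simp
  qed
  then have "countable (bad j)" for j by (rule countable_subset) simp
  then have "countable (\<Union>j. bad j)" by (intro countable_UN countableI_type)
  moreover have "uncountable {0<..<\<delta>}" using assms(2) by (simp add: uncountable_open_interval)
  ultimately have "\<not> {0<..<\<delta>} \<subseteq> (\<Union>j. bad j)" using countable_subset by blast
  then obtain t where "t \<in> {0<..<\<delta>}" "t \<notin> (\<Union>j. bad j)" by blast
  then show ?thesis using that unfolding bad_def by auto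
qed

lemma sn_dense_UNIV: "sn_dense p UNIV"
  unfolding sn_dense_def
proof (rule set_eqI, rule iffI)
  show "x \<in> sn_closure p UNIV" for x
    by (rule sn_closureI) (intro bexI[of _ x], auto)
qed simp

lemma eq_0_if_sn_dense_0:
  fixes x :: 'a
  assumes "sn_dense p {0}"
  shows "x = 0"
proof (rule separating, rule allI)
  fix k
  have less: "p k x < r" if "r > 0" for r
    using sn_closureD[of x p "{0}" "{k}" r] assms that by (simp add: sn_dense_def seminorm_minus)
  have "\<not> p k x > 0" using less[of "p k x"] by auto
  then show "p k x = 0" using seminorm_nonneg[of k x] by linarith
qed

end

locale frechet_operator = complex_frechet_space +
  fixes T :: "'a \<Rightarrow> 'a"
  assumes T_linear: "Vector_Spaces.linear sc sc T"
    and T_continuous: "sn_continuous p T"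
begin

lemma funpow_add: "(T ^^ n) (x + y) = (T ^^ n) x + (T ^^ n) y"
  using T_linear by (induction n) (simp_all add: Vector_Spaces.linear_iff)

lemma funpow_scale: "(T ^^ n) (sc c x) = sc c ((T ^^ n) x)"
  using T_linear by (induction n) (simp_all add: Vector_Spaces.linear_iff)

lemma funpow_zero [simp]: "(T ^^ n) 0 = 0"
  using funpow_scale[of n 0 0] by simp

lemma funpow_sum: "(T ^^ n) (sum f A) = (\<Sum>i\<in>A. (T ^^ n) (f i))"
  by (induction A rule: infinite_finite_induct) (simp_all add: funpow_add)

lemma funpow_sn_conv: "sn_conv p s x \<Longrightarrow> sn_conv p (\<lambda>j. (T ^^ n) (s j)) ((T ^^ n) x)"
  by (induction n) (auto dest: sn_continuous_sn_conv[OF T_continuous])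

lemma subspace_Lset: "subspace (Lset p T \<omega>)"
  by (rule subspaceI)
    (simp_all add: Lset_def rec_seq_def sn_conv_const funpow_add funpow_scale sn_conv_add sn_conv_scale)

lemma hyper_recurrent_if_Hr_dense:
  assumes "sn_dense p (Hr p T)"
  shows "hyper_recurrent p T"
proof -
  have "Hr p T \<subseteq> Rec p T" unfolding Hr_def by blast
  then have "recurrent_op p T"
    using assms sn_closure_mono unfolding recurrent_op_def sn_dense_def by blast
  moreover have "Hr p T \<noteq> {}"
    using assms sn_closureD[of 0 p "Hr p T" "{}" 1] unfolding sn_dense_def by auto
  ultimately show ?thesis unfolding hyper_recurrent_def by blast
qed

text \<open>On the zero space no sequence belongs to \<open>Cseqs\<close>, so \<open>Hr\<close> is all of \<open>Rec\<close>.\<close>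
lemma Hr_dense_trivial:
  assumes "\<And>x::'a. x = 0"
  shows "sn_dense p (Hr p T)"
proof -
  have "admissible_seq Suc" unfolding admissible_seq_def by (simp add: strict_mono_Suc_iff)
  moreover have "rec_seq p T Suc 0" unfolding rec_seq_def funpow_zero by (rule sn_conv_const)
  ultimately have "0 \<in> Rec p T" unfolding Rec_def by blast
  moreover have "Cseqs p T = {}" unfolding Cseqs_def using assms by blast
  ultimately have "0 \<in> Hr p T" unfolding Hr_def by blast
  then have "x \<in> Hr p T" for x using assms[of x] by simp
  then have "Hr p T = UNIV" by blast
  then show ?thesis using sn_dense_UNIV by simp
qed

end

subsection \<open>Expansions along unimodular eigenvectors\<close>

locale eigen_expansion = frechet_operator +
  fixes e :: "nat \<Rightarrow> 'a" and lam :: "nat \<Rightarrow> complex"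
  assumes eigenvector: "\<And>k. T (e k) = sc (lam k) (e k)"
    and unimodular: "\<And>k. cmod (lam k) = 1"
    and nonzero: "\<And>k. e k \<noteq> 0"
    and span_dense: "sn_dense p (span (range e))"
begin

definition coeffs_summable :: "(nat \<Rightarrow> complex) \<Rightarrow> bool" where
  "coeffs_summable d \<longleftrightarrow> (\<forall>m. summable (\<lambda>k. cmod (d k) * p m (e k)))"

definition partial_expansion :: "(nat \<Rightarrow> complex) \<Rightarrow> nat \<Rightarrow> 'a" where
  "partial_expansion d N = (\<Sum>k<N. sc (d k) (e k))"

definition expansion :: "(nat \<Rightarrow> complex) \<Rightarrow> 'a" where
  "expansion d = (SOME x. sn_conv p (partial_expansion d) x)"

lemma funpow_eigenvector: "(T ^^ n) (e k) = sc (lam k ^ n) (e k)"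
  by (induction n) (simp_all add: eigenvector funpow_scale[of 1, simplified] mult.commute)

lemma norm_lam_power_diff_le: "cmod (lam k ^ n - 1) \<le> 2"
  using norm_triangle_ineq4[of "lam k ^ n" 1] by (simp add: norm_power unimodular)

lemma seminorm_partial_expansion_le:
  assumes "b \<le> a"
  shows "p m (partial_expansion d a - partial_expansion d b)
    \<le> (\<Sum>k<a. cmod (d k) * p m (e k)) - (\<Sum>k<b. cmod (d k) * p m (e k))"
proof -
  have "partial_expansion d a = partial_expansion d b + (\<Sum>k\<in>{b..<a}. sc (d k) (e k))"
    unfolding partial_expansion_def using sum.atLeastLessThan_concat[of 0 b a "\<lambda>k. sc (d k) (e k)"] assms
    by (simp add: atLeast0LessThan)
  then have "p m (partial_expansion d a - partial_expansion d b) \<le> (\<Sum>k\<in>{b..<a}. cmod (d k) * p m (e k))"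
    using seminorm_sum[of m "\<lambda>k. sc (d k) (e k)"] by (simp add: seminorm_scale)
  also have "\<dots> = (\<Sum>k<a. cmod (d k) * p m (e k)) - (\<Sum>k<b. cmod (d k) * p m (e k))"
    using sum.atLeastLessThan_concat[of 0 b a "\<lambda>k. cmod (d k) * p m (e k)"] assms
    by (simp add: atLeast0LessThan)
  finally show ?thesis .
qed

lemma sn_cauchy_partial_expansion:
  assumes "coeffs_summable d"
  shows "sn_cauchy p (partial_expansion d)"
  unfolding sn_cauchy_def
proof (intro allI impI)
  fix m and r :: real assume "r > 0"
  let ?s = "\<lambda>N. \<Sum>k<N. cmod (d k) * p m (e k)"
  have "Cauchy ?s"
    using assms unfolding coeffs_summable_def summable_iff_convergent
    by (blast intro: convergent_Cauchy)
  then obtain N where N: "\<And>a b. a \<ge> N \<Longrightarrow> b \<ge> N \<Longrightarrow> dist (?s a) (?s b) < r"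
    using metric_CauchyD[OF _ \<open>r > 0\<close>] by blast
  have "p m (partial_expansion d a - partial_expansion d b) < r" if "a \<ge> N" "b \<ge> N" for a b
  proof (cases "b \<le> a")
    case True
    then show ?thesis
      using seminorm_partial_expansion_le[OF True, of m d] N[OF that] by (simp add: dist_real_def)
  next
    case False
    then show ?thesis
      using seminorm_partial_expansion_le[of a b m d] N[OF that]
      by (simp add: dist_real_def seminorm_diff_commute[of m "partial_expansion d a"])
  qed
  then show "\<exists>N. \<forall>a\<ge>N. \<forall>b\<ge>N. p m (partial_expansion d a - partial_expansion d b) < r" by blast
qed

lemma expansion_converges:
  assumes "coeffs_summable d"
  shows "sn_conv p (partial_expansion d) (expansion d)"
  unfolding expansion_def
  using complete[OF sn_cauchy_partial_expansion[OF assms]] by (rule someI_ex)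

lemma expansion_eqI:
  assumes "coeffs_summable d" "sn_conv p (partial_expansion d) x"
  shows "expansion d = x"
  using sn_conv_unique[OF expansion_converges[OF assms(1)] assms(2)] .

lemma seminorm_expansion_le:
  assumes "coeffs_summable d"
  shows "p m (expansion d) \<le> (\<Sum>k. cmod (d k) * p m (e k))"
proof (rule LIMSEQ_le_const2[OF sn_conv_seminorm[OF expansion_converges[OF assms]]])
  have "summable (\<lambda>k. cmod (d k) * p m (e k))" using assms unfolding coeffs_summable_def by blast
  then have "(\<Sum>k<N. cmod (d k) * p m (e k)) \<le> (\<Sum>k. cmod (d k) * p m (e k))" for N
    by (rule sum_le_suminf) (auto simp: seminorm_nonneg)
  then show "\<exists>N. \<forall>n\<ge>N. p m (partial_expansion d n) \<le> (\<Sum>k. cmod (d k) * p m (e k))"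
    unfolding partial_expansion_def
    using seminorm_sum[of m "\<lambda>k. sc (d k) (e k)"] by (auto simp: seminorm_scale intro: order_trans)
qed

lemma coeffs_summable_dominated:
  assumes "coeffs_summable d" "\<And>k. cmod (b k) \<le> B * cmod (d k)"
  shows "coeffs_summable b"
  unfolding coeffs_summable_def
proof
  fix m
  have "summable (\<lambda>k. B * (cmod (d k) * p m (e k)))"
    using assms(1) unfolding coeffs_summable_def by (intro summable_mult) blast
  then show "summable (\<lambda>k. cmod (b k) * p m (e k))"
  proof (rule summable_comparison_test')
    show "norm (cmod (b k) * p m (e k)) \<le> B * (cmod (d k) * p m (e k))" for k
      using mult_right_mono[OF assms(2) seminorm_nonneg, of k m "e k"] by (simp add: seminorm_nonneg)
  qed
qed

lemma coeffs_summable_bounded_mult: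
  assumes "coeffs_summable d" "\<And>k. cmod (c k) \<le> B"
  shows "coeffs_summable (\<lambda>k. c k * d k)"
  by (rule coeffs_summable_dominated[OF assms(1), of _ B]) (simp add: norm_mult mult_right_mono assms(2))

lemma coeffs_summable_add:
  assumes "coeffs_summable d1" "coeffs_summable d2"
  shows "coeffs_summable (\<lambda>k. d1 k + d2 k)"
  unfolding coeffs_summable_def
proof
  fix m
  have "summable (\<lambda>k. cmod (d1 k) * p m (e k) + cmod (d2 k) * p m (e k))"
    using assms unfolding coeffs_summable_def by (intro summable_add) blast+
  then show "summable (\<lambda>k. cmod (d1 k + d2 k) * p m (e k))"
  proof (rule summable_comparison_test')
    fix k
    have "cmod (d1 k + d2 k) * p m (e k) \<le> (cmod (d1 k) + cmod (d2 k)) * p m (e k)"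
      by (rule mult_right_mono[OF norm_triangle_ineq seminorm_nonneg])
    then show "norm (cmod (d1 k + d2 k) * p m (e k)) \<le> cmod (d1 k) * p m (e k) + cmod (d2 k) * p m (e k)"
      by (simp add: seminorm_nonneg algebra_simps)
  qed
qed

lemma coeffs_summable_mult: "coeffs_summable d \<Longrightarrow> coeffs_summable (\<lambda>k. c * d k)"
  by (rule coeffs_summable_bounded_mult[of _ "\<lambda>_. c" "cmod c"]) simp_all

lemma expansion_add:
  assumes "coeffs_summable d1" "coeffs_summable d2"
  shows "expansion (\<lambda>k. d1 k + d2 k) = expansion d1 + expansion d2"
proof (rule expansion_eqI[OF coeffs_summable_add[OF assms]])
  have "partial_expansion (\<lambda>k. d1 k + d2 k) = (\<lambda>N. partial_expansion d1 N + partial_expansion d2 N)"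
    unfolding partial_expansion_def by (simp add: scale_left_distrib sum.distrib)
  then show "sn_conv p (partial_expansion (\<lambda>k. d1 k + d2 k)) (expansion d1 + expansion d2)"
    using sn_conv_add[OF expansion_converges[OF assms(1)] expansion_converges[OF assms(2)]] by simp
qed

lemma expansion_mult:
  assumes "coeffs_summable d"
  shows "expansion (\<lambda>k. c * d k) = sc c (expansion d)"
proof (rule expansion_eqI[OF coeffs_summable_mult[OF assms]])
  have "partial_expansion (\<lambda>k. c * d k) = (\<lambda>N. sc c (partial_expansion d N))"
    unfolding partial_expansion_def by (simp add: scale_sum_right)
  then show "sn_conv p (partial_expansion (\<lambda>k. c * d k)) (sc c (expansion d))"
    using sn_conv_scale[OF expansion_converges[OF assms]] by simp
qed

lemma expansion_diff:
  assumes "coeffs_summable d1" "coeffs_summable d2"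
  shows "expansion (\<lambda>k. d1 k - d2 k) = expansion d1 - expansion d2"
  using expansion_add[OF assms(1) coeffs_summable_mult[OF assms(2), of "-1"]]
    expansion_mult[OF assms(2), of "-1"]
  by simp

lemma
  assumes "\<And>k. k \<ge> N \<Longrightarrow> d k = 0"
  shows coeffs_summable_finite: "coeffs_summable d"
    and expansion_finite: "expansion d = partial_expansion d N"
proof -
  show summable: "coeffs_summable d"
    unfolding coeffs_summable_def
  proof
    fix m
    show "summable (\<lambda>k. cmod (d k) * p m (e k))"
      by (rule summable_comparison_test'[of "\<lambda>_. 0" N]) (simp_all add: assms)
  qed
  have stable: "partial_expansion d n = partial_expansion d N" if "n \<ge> N" for n
  proof -
    have "partial_expansion d n = partial_expansion d N + (\<Sum>k\<in>{N..<n}. sc (d k) (e k))"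
      unfolding partial_expansion_def using sum.atLeastLessThan_concat[of 0 N n "\<lambda>k. sc (d k) (e k)"] that
      by (simp add: atLeast0LessThan)
    moreover have "(\<Sum>k\<in>{N..<n}. sc (d k) (e k)) = 0"
      by (rule sum.neutral) (simp add: assms)
    ultimately show ?thesis by simp
  qed
  have "sn_conv p (partial_expansion d) (partial_expansion d N)"
    unfolding sn_conv_def
  proof
    fix m
    have "p m (partial_expansion d n - partial_expansion d N) = 0" if "n \<ge> N" for n
      using stable[OF that] by simp
    then have "\<forall>\<^sub>F n in sequentially. p m (partial_expansion d n - partial_expansion d N) = 0"
      unfolding eventually_sequentially by blast
    then show "(\<lambda>n. p m (partial_expansion d n - partial_expansion d N)) \<longlonglongrightarrow> 0"
      by (rule tendsto_eventually)
  qed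
  then show "expansion d = partial_expansion d N" by (rule expansion_eqI[OF summable])
qed

lemma expansion_0: "expansion (\<lambda>k. 0) = 0" and coeffs_summable_0: "coeffs_summable (\<lambda>k. 0)"
  using expansion_finite[of 0 "\<lambda>k. 0"] coeffs_summable_finite[of 0 "\<lambda>k. 0"]
  by (simp_all add: partial_expansion_def)

lemma expansion_sum:
  assumes "finite A" "\<And>i. i \<in> A \<Longrightarrow> coeffs_summable (f i)"
  shows "coeffs_summable (\<lambda>k. \<Sum>i\<in>A. f i k) \<and> expansion (\<lambda>k. \<Sum>i\<in>A. f i k) = (\<Sum>i\<in>A. expansion (f i))"
  using assms
proof (induction A rule: finite_induct)
  case (insert x F)
  then show ?case
    using expansion_add[of "f x" "\<lambda>k. \<Sum>i\<in>F. f i k"] coeffs_summable_add[of "f x" "\<lambda>k. \<Sum>i\<in>F. f i k"]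
    by simp
qed (simp add: expansion_0 coeffs_summable_0)

lemma funpow_expansion:
  assumes "coeffs_summable d"
  shows "(T ^^ n) (expansion d) = expansion (\<lambda>k. lam k ^ n * d k)"
proof -
  have "(T ^^ n) (partial_expansion d N) = partial_expansion (\<lambda>k. lam k ^ n * d k) N" for N
    unfolding partial_expansion_def funpow_sum funpow_scale funpow_eigenvector scale_scale
    by (simp only: mult.commute)
  then have "sn_conv p (partial_expansion (\<lambda>k. lam k ^ n * d k)) ((T ^^ n) (expansion d))"
    using funpow_sn_conv[OF expansion_converges[OF assms], of n] by simp
  moreover have "coeffs_summable (\<lambda>k. lam k ^ n * d k)"
    by (rule coeffs_summable_bounded_mult[OF assms, of _ 1]) (simp add: norm_power unimodular)
  ultimately show ?thesis by (simp add: expansion_eqI)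
qed

lemma funpow_expansion_diff:
  assumes "coeffs_summable d"
  shows "(T ^^ n) (expansion d) - expansion d = expansion (\<lambda>k. (lam k ^ n - 1) * d k)"
proof -
  have "coeffs_summable (\<lambda>k. lam k ^ n * d k)"
    by (rule coeffs_summable_bounded_mult[OF assms, of _ 1]) (simp add: norm_power unimodular)
  then show ?thesis
    using funpow_expansion[OF assms, of n] expansion_diff[of "\<lambda>k. lam k ^ n * d k" d] assms
    by (simp add: algebra_simps)
qed

lemma expansion_tendsto_0:
  assumes "coeffs_summable d" and "\<And>k. (\<lambda>n. c n k) \<longlonglongrightarrow> 0" and "\<And>n k. cmod (c n k) \<le> B"
  shows "sn_conv p (\<lambda>n. expansion (\<lambda>k. c n k * d k)) 0"
  unfolding sn_conv_def
proof
  fix m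
  have "(\<lambda>n. \<Sum>k. cmod (c n k) * (cmod (d k) * p m (e k))) \<longlonglongrightarrow> 0"
    using assms unfolding coeffs_summable_def
    by (intro weighted_suminf_tendsto_0) (auto simp: seminorm_nonneg)
  moreover have "p m (expansion (\<lambda>k. c n k * d k)) \<le> (\<Sum>k. cmod (c n k) * (cmod (d k) * p m (e k)))" for n
    using seminorm_expansion_le[OF coeffs_summable_bounded_mult[OF assms(1) assms(3)]]
    by (simp add: norm_mult mult.assoc)
  ultimately have "(\<lambda>n. p m (expansion (\<lambda>k. c n k * d k))) \<longlonglongrightarrow> 0"
    by (intro tendsto_zero_if_nonneg_le[OF seminorm_nonneg])
  then show "(\<lambda>n. p m (expansion (\<lambda>k. c n k * d k) - 0)) \<longlonglongrightarrow> 0" by simp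
qed


subsection \<open>Recurrence of expansions\<close>

lemma rec_seq_expansion:
  assumes "coeffs_summable d" and returns: "\<And>k. (\<lambda>n. lam k ^ \<omega> n) \<longlonglongrightarrow> 1"
  shows "rec_seq p T \<omega> (expansion d)"
proof -
  have "sn_conv p (\<lambda>n. expansion (\<lambda>k. (lam k ^ \<omega> n - 1) * d k)) 0"
    using assms(1) LIM_zero[OF returns] norm_lam_power_diff_le by (rule expansion_tendsto_0)
  then show ?thesis
    unfolding rec_seq_def sn_conv_def by (simp add: funpow_expansion_diff[OF assms(1)])
qed

lemma eigenvector_in_Lset:
  assumes "(\<lambda>n. lam k ^ \<omega> n) \<longlonglongrightarrow> 1"
  shows "e k \<in> Lset p T \<omega>"
  unfolding Lset_def rec_seq_def sn_conv_def
proof (intro CollectI allI)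
  fix m
  have "(T ^^ \<omega> n) (e k) - e k = sc (lam k ^ \<omega> n - 1) (e k)" for n
    by (simp add: funpow_eigenvector scale_left_diff_distrib)
  moreover have "(\<lambda>n. cmod (lam k ^ \<omega> n - 1) * p m (e k)) \<longlonglongrightarrow> 0"
    using tendsto_norm_zero[OF LIM_zero[OF assms]] by (rule tendsto_mult_left_zero)
  ultimately show "(\<lambda>n. p m ((T ^^ \<omega> n) (e k) - e k)) \<longlonglongrightarrow> 0"
    by (simp add: seminorm_scale)
qed

lemma Lset_dense:
  assumes "\<And>k. (\<lambda>n. lam k ^ \<omega> n) \<longlonglongrightarrow> 1"
  shows "sn_dense p (Lset p T \<omega>)"
proof -
  have "span (range e) \<subseteq> Lset p T \<omega>"
    using eigenvector_in_Lset[OF assms] by (intro span_minimal subspace_Lset) blast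
  then show ?thesis
    using sn_closure_mono span_dense unfolding sn_dense_def by blast
qed

lemma expansion_in_Rec:
  assumes "coeffs_summable d"
  shows "expansion d \<in> Rec p T"
proof -
  obtain \<omega> where "admissible_seq \<omega>" "\<And>k. (\<lambda>n. lam k ^ \<omega> n) \<longlonglongrightarrow> 1"
    using unimodular_powers_return_seq[of lam] unimodular by blast
  then show ?thesis unfolding Rec_def using rec_seq_expansion[OF assms] by blast
qed

definition coeffs_at :: "complex \<Rightarrow> (nat \<Rightarrow> complex) \<Rightarrow> nat \<Rightarrow> complex" where
  "coeffs_at \<mu> d k = (if lam k = \<mu> then d k else 0)"

lemma coeffs_summable_coeffs_at: "coeffs_summable d \<Longrightarrow> coeffs_summable (coeffs_at \<mu> d)"
  by (rule coeffs_summable_dominated[of d _ 1]) (simp_all add: coeffs_at_def)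

text \<open>For unimodular \<open>\<mu>\<close>, the averages of \<open>(cnj \<mu> T)\<^sup>m\<close> extract the \<open>\<mu>\<close>-eigencomponent.\<close>
definition eigen_average :: "complex \<Rightarrow> nat \<Rightarrow> 'a \<Rightarrow> 'a" where
  "eigen_average \<mu> N v = (\<Sum>m<N. sc (cnj \<mu> ^ m / of_nat N) ((T ^^ m) v))"

definition average_defect :: "complex \<Rightarrow> nat \<Rightarrow> nat \<Rightarrow> complex" where
  "average_defect \<mu> N k = power_mean N (cnj \<mu> * lam k) - (if lam k = \<mu> then 1 else 0)"

lemma eigen_average_expansion:
  assumes "coeffs_summable d"
  shows "eigen_average \<mu> N (expansion d) = expansion (\<lambda>k. power_mean N (cnj \<mu> * lam k) * d k)"
proof -
  let ?c = "\<lambda>m k. cnj \<mu> ^ m / of_nat N * (lam k ^ m * d k)"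
  have summable: "coeffs_summable (\<lambda>k. lam k ^ m * d k)" for m
    by (rule coeffs_summable_bounded_mult[OF assms, of _ 1]) (simp add: norm_power unimodular)
  have "eigen_average \<mu> N (expansion d) = (\<Sum>m<N. expansion (?c m))"
    unfolding eigen_average_def funpow_expansion[OF assms] expansion_mult[OF summable] ..
  also have "\<dots> = expansion (\<lambda>k. \<Sum>m<N. ?c m k)"
    by (rule expansion_sum[THEN conjunct2, symmetric]) (simp, rule coeffs_summable_mult[OF summable])
  also have "(\<lambda>k. \<Sum>m<N. ?c m k) = (\<lambda>k. power_mean N (cnj \<mu> * lam k) * d k)"
    unfolding power_mean_def
    by (simp add: power_mult_distrib sum_divide_distrib sum_distrib_right mult.assoc)
  finally show ?thesis .
qed

lemma eigen_average_sn_conv_0: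
  assumes "sn_conv p s 0"
  shows "sn_conv p (\<lambda>n. eigen_average \<mu> N (s n)) 0"
proof -
  have "sn_conv p (\<lambda>n. \<Sum>m<M. sc (c m) ((T ^^ m) (s n))) 0" for M and c :: "nat \<Rightarrow> complex"
  proof (induction M)
    case (Suc M)
    have "sn_conv p (\<lambda>n. sc (c M) ((T ^^ M) (s n))) 0"
      using sn_conv_scale[OF funpow_sn_conv[OF assms]] by simp
    then show ?case using sn_conv_add[OF Suc.IH] by fastforce
  qed (simp add: sn_conv_const)
  then show ?thesis unfolding eigen_average_def .
qed

lemma norm_average_defect_le:
  assumes "cmod \<mu> = 1"
  shows "cmod (average_defect \<mu> N k) \<le> 2"
proof -
  have "cmod (power_mean N (cnj \<mu> * lam k)) \<le> 1"
    by (rule norm_power_mean_le) (simp add: norm_mult unimodular assms)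
  then show ?thesis
    using norm_triangle_ineq4[of "power_mean N (cnj \<mu> * lam k)" "if lam k = \<mu> then 1 else 0"]
    unfolding average_defect_def by (simp split: if_splits)
qed

lemma average_defect_tendsto_0:
  assumes "cmod \<mu> = 1"
  shows "(\<lambda>N. average_defect \<mu> N k) \<longlonglongrightarrow> 0"
proof (cases "lam k = \<mu>")
  case True
  then have "cnj \<mu> * lam k = 1" using assms by (simp add: complex_norm_square[symmetric] mult.commute)
  then have "average_defect \<mu> N k = 0" if "N \<ge> 1" for N
    using that by (simp add: average_defect_def True power_mean_1)
  then have "\<forall>\<^sub>F N in sequentially. average_defect \<mu> N k = 0"
    by (rule eventually_sequentiallyI)
  then show ?thesis by (rule tendsto_eventually)
next
  case False
  have "cnj \<mu> * lam k \<noteq> 1"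
  proof
    assume "cnj \<mu> * lam k = 1"
    then have "\<mu> * (cnj \<mu> * lam k) = \<mu>" by simp
    then show False using False assms by (simp add: mult.assoc[symmetric] complex_norm_square[symmetric])
  qed
  then have "(\<lambda>N. power_mean N (cnj \<mu> * lam k)) \<longlonglongrightarrow> 0"
    using assms by (intro power_mean_tendsto_0) (simp_all add: norm_mult unimodular)
  then show ?thesis using False by (simp add: average_defect_def)
qed

lemma eigen_average_expansion_minus_component:
  assumes "coeffs_summable d" "cmod \<mu> = 1" "N > 0"
  shows "eigen_average \<mu> N (expansion d) - expansion (coeffs_at \<mu> d)
    = expansion (\<lambda>k. average_defect \<mu> N k * d k)"
proof -
  have "cmod (power_mean N (cnj \<mu> * lam k)) \<le> 1" for k
    by (rule norm_power_mean_le) (simp add: norm_mult unimodular assms(2))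
  then have "coeffs_summable (\<lambda>k. power_mean N (cnj \<mu> * lam k) * d k)"
    by (rule coeffs_summable_bounded_mult[OF assms(1)])
  moreover have "power_mean N (cnj \<mu> * lam k) * d k - coeffs_at \<mu> d k = average_defect \<mu> N k * d k" for k
    using assms(2,3)
    by (cases "lam k = \<mu>") (simp_all add: coeffs_at_def average_defect_def power_mean_1
        complex_norm_square[symmetric] mult.commute algebra_simps)
  ultimately show ?thesis
    using eigen_average_expansion[OF assms(1)]
      expansion_diff[of "\<lambda>k. power_mean N (cnj \<mu> * lam k) * d k" "coeffs_at \<mu> d"]
      coeffs_summable_coeffs_at[OF assms(1)]
    by simp
qed

lemma seminorm_average_defect_expansion_le:
  assumes "coeffs_summable d" "cmod \<mu> = 1" "\<And>k. cmod (c k) \<le> 2"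
  shows "p m (expansion (\<lambda>k. average_defect \<mu> N k * (c k * d k)))
    \<le> (\<Sum>k. cmod (average_defect \<mu> N k) * (2 * (cmod (d k) * p m (e k))))"
proof -
  let ?w = "\<lambda>k. cmod (d k) * p m (e k)"
  have w: "summable ?w" "\<And>k. ?w k \<ge> 0"
    using assms(1) unfolding coeffs_summable_def by (auto simp: seminorm_nonneg)
  have bound: "cmod (average_defect \<mu> N k * (c k * d k)) * p m (e k)
      \<le> cmod (average_defect \<mu> N k) * (2 * ?w k)" for k
  proof -
    have "cmod (c k) * ?w k \<le> 2 * ?w k" by (rule mult_right_mono[OF assms(3) w(2)])
    then have "cmod (average_defect \<mu> N k) * (cmod (c k) * ?w k)
        \<le> cmod (average_defect \<mu> N k) * (2 * ?w k)"
      by (rule mult_left_mono) simp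
    then show ?thesis by (simp add: norm_mult mult_ac)
  qed
  have summable: "coeffs_summable (\<lambda>k. average_defect \<mu> N k * (c k * d k))"
    using coeffs_summable_bounded_mult[OF coeffs_summable_bounded_mult[OF assms(1) assms(3)]
        norm_average_defect_le[OF assms(2)]]
    by (simp add: mult.assoc)
  then have "p m (expansion (\<lambda>k. average_defect \<mu> N k * (c k * d k)))
      \<le> (\<Sum>k. cmod (average_defect \<mu> N k * (c k * d k)) * p m (e k))"
    by (rule seminorm_expansion_le)
  also have "\<dots> \<le> (\<Sum>k. cmod (average_defect \<mu> N k) * (2 * ?w k))"
  proof (rule suminf_le[OF bound])
    show "summable (\<lambda>k. cmod (average_defect \<mu> N k * (c k * d k)) * p m (e k))"
      using summable unfolding coeffs_summable_def by blast
    show "summable (\<lambda>k. cmod (average_defect \<mu> N k) * (2 * ?w k))"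
    proof (rule summable_comparison_test'[of "\<lambda>k. 4 * ?w k" 0])
      show "summable (\<lambda>k. 4 * ?w k)" using w(1) by (rule summable_mult)
      show "norm (cmod (average_defect \<mu> N k) * (2 * ?w k)) \<le> 4 * ?w k" for k
      proof -
        have "2 * cmod (average_defect \<mu> N k) * ?w k \<le> 4 * ?w k"
          using norm_average_defect_le[OF assms(2), of N k] w(2)[of k] by (intro mult_right_mono) auto
        then show ?thesis using w(2)[of k] by (simp add: abs_mult mult_ac seminorm_nonneg)
      qed
    qed
  qed
  finally show ?thesis .
qed

text \<open>Averaging \<open>T\<^sup>\<omega>\<^sup>n x - x\<close>, which tends to \<open>0\<close>, isolates \<open>\<mu>\<^sup>\<omega>\<^sup>n - 1\<close> times the
  \<open>\<mu>\<close>-component of \<open>x\<close>, up to an error that is uniformly small in \<open>n\<close>.\<close>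
lemma component_returns:
  assumes d: "coeffs_summable d" and rec: "rec_seq p T \<omega> (expansion d)"
    and S: "expansion (coeffs_at \<mu> d) \<noteq> 0" and \<mu>: "cmod \<mu> = 1"
  shows "(\<lambda>n. \<mu> ^ \<omega> n) \<longlonglongrightarrow> 1"
proof -
  define S where "S = expansion (coeffs_at \<mu> d)"
  obtain m where "p m S \<noteq> 0"
    using S separating[of S] unfolding S_def by blast
  then have pS: "p m S > 0" using seminorm_nonneg[of m S] by linarith
  define D where "D n k = (lam k ^ \<omega> n - 1) * d k" for n k
  have D: "coeffs_summable (D n)" for n
    unfolding D_def using norm_lam_power_diff_le by (rule coeffs_summable_bounded_mult[OF d])
  have "sn_conv p (\<lambda>n. expansion (D n)) 0"
    using rec unfolding rec_seq_def sn_conv_def D_def by (simp add: funpow_expansion_diff[OF d])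
  then have avg_0: "sn_conv p (\<lambda>n. eigen_average \<mu> N (expansion (D n))) 0" for N
    by (rule eigen_average_sn_conv_0)
  define \<delta> where "\<delta> N = (\<Sum>k. cmod (average_defect \<mu> N k) * (2 * (cmod (d k) * p m (e k))))" for N
  have \<delta>: "\<delta> \<longlonglongrightarrow> 0"
    unfolding \<delta>_def using d norm_average_defect_le[OF \<mu>] unfolding coeffs_summable_def
    by (intro weighted_suminf_tendsto_0 average_defect_tendsto_0[OF \<mu>]) (auto simp: seminorm_nonneg)
  have error: "p m (eigen_average \<mu> N (expansion (D n)) - sc (\<mu> ^ \<omega> n - 1) S) \<le> \<delta> N"
    if "N > 0" for N n
  proof -
    have "coeffs_at \<mu> (D n) = (\<lambda>k. (\<mu> ^ \<omega> n - 1) * coeffs_at \<mu> d k)"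
      by (auto simp: coeffs_at_def D_def)
    then have "expansion (coeffs_at \<mu> (D n)) = sc (\<mu> ^ \<omega> n - 1) S"
      unfolding S_def using expansion_mult[OF coeffs_summable_coeffs_at[OF d]] by simp
    then show ?thesis
      using eigen_average_expansion_minus_component[OF D \<mu> that, of n]
        seminorm_average_defect_expansion_le[OF d \<mu> norm_lam_power_diff_le, of m N]
      unfolding \<delta>_def D_def by simp
  qed
  have "(\<lambda>n. \<mu> ^ \<omega> n - 1) \<longlonglongrightarrow> 0"
    using pS \<delta> avg_0 error
    by (rule tendsto_0_if_uniformly_approximated[where a="\<lambda>N n. eigen_average \<mu> N (expansion (D n))"])
  then show ?thesis by (rule LIM_zero_cancel)
qed

lemma expansion_in_Hr:
  assumes d: "coeffs_summable d" and components: "\<And>j. expansion (coeffs_at (lam j) d) \<noteq> 0"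
  shows "expansion d \<in> Hr p T"
  unfolding Hr_def
proof (intro CollectI conjI ballI impI)
  show "expansion d \<in> Rec p T" by (rule expansion_in_Rec[OF d])
next
  fix \<omega> assume "expansion d \<in> Lset p T \<omega>"
  then have "rec_seq p T \<omega> (expansion d)" unfolding Lset_def by simp
  then show "sn_dense p (Lset p T \<omega>)"
    using component_returns[OF d _ components unimodular] Lset_dense by blast
qed

subsection \<open>Density of hyper-recurrent vectors\<close>

lemma span_subset_expansions:
  "span (range e) \<subseteq> {expansion a | a. coeffs_summable a}"
proof (rule span_minimal)
  show "range e \<subseteq> {expansion a | a. coeffs_summable a}"
  proof (rule image_subsetI)
    fix j :: nat
    define a where "a k = (if k = j then 1 else (0::complex))" for k
    have a: "\<And>k. k \<ge> Suc j \<Longrightarrow> a k = 0" unfolding a_def by simp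
    have "expansion a = partial_expansion a (Suc j)" by (rule expansion_finite[of "Suc j"]) (rule a)
    also have "\<dots> = e j"
      unfolding partial_expansion_def a_def
      by (simp add: if_distrib[of "\<lambda>c. sc c _"] sum.delta cong: if_cong)
    finally have "expansion a = e j" .
    moreover have "coeffs_summable a" by (rule coeffs_summable_finite[of "Suc j"]) (rule a)
    ultimately show "e j \<in> {expansion a | a. coeffs_summable a}" by force
  qed
  show "subspace {expansion a | a. coeffs_summable a}"
  proof (rule subspaceI)
    show "0 \<in> {expansion a | a. coeffs_summable a}"
      using expansion_0 coeffs_summable_0 by force
  next
    fix x y assume "x \<in> {expansion a | a. coeffs_summable a}" "y \<in> {expansion a | a. coeffs_summable a}"
    then obtain a b where "x = expansion a" "y = expansion b" and ab: "coeffs_summable a" "coeffs_summable b"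
      by blast
    then have "x + y = expansion (\<lambda>k. a k + b k)" by (simp add: expansion_add)
    then show "x + y \<in> {expansion a | a. coeffs_summable a}"
      using coeffs_summable_add[OF ab] by blast
  next
    fix c x assume "x \<in> {expansion a | a. coeffs_summable a}"
    then obtain a where "x = expansion a" and a: "coeffs_summable a" by blast
    then have "sc c x = expansion (\<lambda>k. c * a k)" by (simp add: expansion_mult)
    then show "sc c x \<in> {expansion a | a. coeffs_summable a}"
      using coeffs_summable_mult[OF a] by blast
  qed
qed

definition weight :: "nat \<Rightarrow> real" where
  "weight k = inverse (2 ^ k * (1 + (\<Sum>j\<le>k. p j (e k))))"

text \<open>The weight sits on the first index carrying each eigenvalue, so every eigencomponent of
  the expansion is nonzero, while the decay of \<open>weight\<close> makes all seminorm series converge.\<close>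
definition generic_coeffs :: "nat \<Rightarrow> complex" where
  "generic_coeffs k = (if \<forall>i<k. lam i \<noteq> lam k then of_real (weight k) else 0)"

lemma weight_pos: "weight k > 0"
proof -
  have "(\<Sum>j\<le>k. p j (e k)) \<ge> 0" by (intro sum_nonneg) (simp add: seminorm_nonneg)
  then show ?thesis unfolding weight_def by simp
qed

lemma coeffs_summable_generic: "coeffs_summable generic_coeffs"
  unfolding coeffs_summable_def
proof
  fix m
  show "summable (\<lambda>k. cmod (generic_coeffs k) * p m (e k))"
  proof (rule summable_comparison_test'[of "\<lambda>k. (1/2) ^ k" m])
    show "summable (\<lambda>k. (1/2::real) ^ k)" by (rule summable_geometric) simp
  next
    fix k assume "m \<le> k"
    define P where "P = 1 + (\<Sum>j\<le>k. p j (e k))"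
    have "p m (e k) \<le> (\<Sum>j\<le>k. p j (e k))"
      using \<open>m \<le> k\<close> by (intro member_le_sum) (auto simp: seminorm_nonneg)
    then have P: "p m (e k) \<le> P" "P > 0"
      unfolding P_def using seminorm_nonneg[of m "e k"] by linarith+
    have "cmod (generic_coeffs k) * p m (e k) \<le> weight k * P"
      unfolding generic_coeffs_def using weight_pos[of k] P(1) seminorm_nonneg[of m "e k"]
      by (auto intro: mult_mono)
    also have "\<dots> = (1/2) ^ k"
      unfolding weight_def P_def[symmetric] using P(2) by (simp add: power_one_over field_simps)
    finally show "norm (cmod (generic_coeffs k) * p m (e k)) \<le> (1/2) ^ k"
      by (simp add: seminorm_nonneg)
  qed
qed

lemma expansion_generic_component_nonzero: "expansion (coeffs_at (lam j) generic_coeffs) \<noteq> 0"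
proof -
  define k0 where "k0 = (LEAST k. lam k = lam j)"
  have k0: "lam k0 = lam j" unfolding k0_def by (rule LeastI) (rule refl)
  have before: "i < k0 \<Longrightarrow> lam i \<noteq> lam j" for i unfolding k0_def using not_less_Least by blast
  have coeffs: "coeffs_at (lam j) generic_coeffs k = (if k = k0 then of_real (weight k0) else 0)" for k
  proof (cases "lam k = lam j")
    case True
    then have "k0 \<le> k" unfolding k0_def by (rule Least_le)
    then show ?thesis
      using True k0 before unfolding coeffs_at_def generic_coeffs_def by (auto simp: le_less)
  qed (use k0 in \<open>auto simp: coeffs_at_def\<close>)
  have "\<And>k. k \<ge> Suc k0 \<Longrightarrow> coeffs_at (lam j) generic_coeffs k = 0" using coeffs by simp
  then have "expansion (coeffs_at (lam j) generic_coeffs)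
      = partial_expansion (coeffs_at (lam j) generic_coeffs) (Suc k0)"
    by (rule expansion_finite)
  also have "\<dots> = sc (of_real (weight k0)) (e k0)"
    unfolding partial_expansion_def coeffs
    by (simp add: if_distrib[of "\<lambda>c. sc c _"] sum.delta cong: if_cong)
  finally have "expansion (coeffs_at (lam j) generic_coeffs) = sc (of_real (weight k0)) (e k0)" .
  then show ?thesis using weight_pos[of k0] nonzero[of k0] by simp
qed

lemma expansion_in_closure_Hr:
  assumes a: "coeffs_summable a"
  shows "expansion a \<in> sn_closure p (Hr p T)"
proof (rule sn_closureI)
  fix K :: "nat set" and \<epsilon> :: real assume "finite K" "\<epsilon> > 0"
  define g where "g = expansion generic_coeffs"
  define C where "C = 1 + (\<Sum>k\<in>K. p k g)"
  have "(\<Sum>k\<in>K. p k g) \<ge> 0" by (intro sum_nonneg) (simp add: seminorm_nonneg)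
  then have "C > 0" unfolding C_def by linarith
  have C: "p k g < C" if "k \<in> K" for k
  proof -
    have "p k g \<le> (\<Sum>k\<in>K. p k g)"
      using that \<open>finite K\<close> by (intro member_le_sum) (simp_all add: seminorm_nonneg)
    then show ?thesis unfolding C_def by linarith
  qed
  have "\<epsilon> / C > 0" using \<open>\<epsilon> > 0\<close> \<open>C > 0\<close> by simp
  then obtain t where t: "0 < t" "t < \<epsilon> / C"
    and avoid: "\<And>j. expansion (coeffs_at (lam j) a)
      + sc (of_real t) (expansion (coeffs_at (lam j) generic_coeffs)) \<noteq> 0"
    by (rule small_real_avoiding_lines[where W="\<lambda>j. expansion (coeffs_at (lam j) generic_coeffs)"
          and U="\<lambda>j. expansion (coeffs_at (lam j) a)", OF expansion_generic_component_nonzero]) blast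
  define d where "d k = a k + of_real t * generic_coeffs k" for k
  have generic_t: "coeffs_summable (\<lambda>k. of_real t * generic_coeffs k)"
    by (rule coeffs_summable_mult[OF coeffs_summable_generic])
  have d: "coeffs_summable d" unfolding d_def by (rule coeffs_summable_add[OF a generic_t])
  have "coeffs_at (lam j) d = (\<lambda>k. coeffs_at (lam j) a k + of_real t * coeffs_at (lam j) generic_coeffs k)" for j
    by (auto simp: coeffs_at_def d_def)
  then have "expansion (coeffs_at (lam j) d) \<noteq> 0" for j
    using avoid[of j] expansion_add[OF coeffs_summable_coeffs_at[OF a]
        coeffs_summable_mult[OF coeffs_summable_coeffs_at[OF coeffs_summable_generic]]]
      expansion_mult[OF coeffs_summable_coeffs_at[OF coeffs_summable_generic]]
    by simp
  then have "expansion d \<in> Hr p T" by (rule expansion_in_Hr[OF d])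
  moreover have "p k (expansion d - expansion a) < \<epsilon>" if "k \<in> K" for k
  proof -
    have "expansion d - expansion a = sc (of_real t) g"
      unfolding d_def g_def expansion_add[OF a generic_t] expansion_mult[OF coeffs_summable_generic] by simp
    then have "p k (expansion d - expansion a) = t * p k g" using t(1) by (simp add: seminorm_scale)
    also have "\<dots> \<le> t * C" using C[OF that] t(1) by simp
    also have "\<dots> < \<epsilon>" using t(2) \<open>C > 0\<close> by (simp add: field_simps)
    finally show ?thesis .
  qed
  ultimately show "\<exists>y\<in>Hr p T. \<forall>k\<in>K. p k (y - expansion a) < \<epsilon>" by blast
qed

lemma Hr_dense: "sn_dense p (Hr p T)"
proof -
  have "span (range e) \<subseteq> sn_closure p (Hr p T)"
    using span_subset_expansions expansion_in_closure_Hr by blast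
  then show ?thesis
    using sn_closure_trans span_dense unfolding sn_dense_def by blast
qed

end


context frechet_operator
begin

lemma Hr_dense_if_eigenvectors_dense:
  assumes F: "F \<subseteq> unimod_eigvecs sc T - {0}" "countable F" and dense: "sn_dense p (span F)"
  shows "sn_dense p (Hr p T)"
proof (cases "F = {}")
  case True
  then have "x = 0" for x :: 'a using dense eq_0_if_sn_dense_0 by simp
  then show ?thesis by (rule Hr_dense_trivial)
next
  case False
  define e where "e = from_nat_into F"
  have e: "range e = F" unfolding e_def using False F(2) by simp
  define lam where "lam k = (SOME c. cmod c = 1 \<and> T (e k) = sc c (e k))" for k
  have lam: "cmod (lam k) = 1 \<and> T (e k) = sc (lam k) (e k)" for k
  proof -
    have "e k \<in> unimod_eigvecs sc T" using e F(1) by blast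
    then have "\<exists>c. cmod c = 1 \<and> T (e k) = sc c (e k)" unfolding unimod_eigvecs_def by blast
    then show ?thesis unfolding lam_def by (rule someI_ex)
  qed
  interpret eigen_expansion sc p T e lam
    using lam e F(1) dense by unfold_locales auto
  show ?thesis by (rule Hr_dense)
qed

end

theorem theorem5p12:
  fixes sc :: "complex \<Rightarrow> 'a::ab_group_add \<Rightarrow> 'a"
    and p :: "nat \<Rightarrow> 'a \<Rightarrow> real"
    and T :: "'a \<Rightarrow> 'a"
  assumes "complex_frechet sc p"
    and "sn_separable p"
    and "Vector_Spaces.linear sc sc T"
    and "sn_continuous p T"
    and "bij T"
    and "sn_continuous p (inv T)"
    and "sn_closure p (module.span sc (unimod_eigvecs sc T)) = UNIV"
  shows "hyper_recurrent p T \<and> sn_dense p (Hr p T)"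
proof -
  interpret frechet_operator sc p T
    using assms(1,3,4)
    unfolding complex_frechet_def frechet_operator_def frechet_operator_axioms_def
      complex_frechet_space_def complex_frechet_space_axioms_def
    by auto
  obtain Y where Y: "Y \<subseteq> span (unimod_eigvecs sc T)" "countable Y" "sn_dense p Y"
    using countable_dense_subset[OF assms(2)] assms(7) unfolding sn_dense_def by blast
  then obtain F where F: "F \<subseteq> unimod_eigvecs sc T - {0}" "countable F" "Y \<subseteq> span F"
    using countable_subset_spanning by blast
  have "sn_dense p (span F)"
    using Y(3) F(3) sn_closure_mono unfolding sn_dense_def by blast
  then have "sn_dense p (Hr p T)" by (rule Hr_dense_if_eigenvectors_dense[OF F(1,2)])
  then show ?thesis using hyper_recurrent_if_Hr_dense by blast
qed

end
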